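(* Let $X$ be a smooth Minkowski plane and $A\subset X$ finite with $|A|$ even. If $\mathrm{FT}(A)$ intersects the boundary of $\operatorname{conv}A$, then $A$ is a double cluster or a pseudo double cluster.
   Context: A Minkowski plane is a two-dimensional real normed space $(X,\|\cdot\|)$ with unit ball $B$; it is smooth if every boundary point of $B$ has a unique supporting line. A proper exposed face of $B$ is the intersection of $B$ with a supporting line. For finite $A$, $\mathrm{FT}(A)$ is the set of minimizers of $\mathbf{x}\mapsto\sum_{\mathbf{a}\in A}\|\mathbf{x}-\mathbf{a}\|$ (Fermat-Torricelli points). A set $C=\{\mathbf{x}_1,\dots,\mathbf{x}_m,\mathbf{y}_1,\dots,\mathbf{y}_m\}$ is a double cluster with pairs $\mathbf{x}_i,\mathbf{y}_i$ if all $\frac{\mathbf{x}_i-\mathbf{y}_i}{\|\mathbf{x}_i-\mathbf{y}_i\|}$ lie in the same proper exposed face of $B$. A pseudo double cluster is the union of a double cluster $C$, a Fermat-Torricelli point of $C$ (its centre), and one further arbitrary point. *)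

theory Defs
  imports "HOL-Analysis.Analysis"
begin

type_synonym pt = "real^2"

definition is_norm :: "(pt \<Rightarrow> real) \<Rightarrow> bool" where
  "is_norm N \<longleftrightarrow> (\<forall>x. N x = 0 \<longleftrightarrow> x = 0) \<and>
     (\<forall>c x. N (c *\<^sub>R x) = \<bar>c\<bar> * N x) \<and>
     (\<forall>x y. N (x + y) \<le> N x + N y)"

definition unit_ball :: "(pt \<Rightarrow> real) \<Rightarrow> pt set" where
  "unit_ball N = {x. N x \<le> 1}"

definition supporting_line :: "(pt \<Rightarrow> real) \<Rightarrow> pt set \<Rightarrow> bool" where
  "supporting_line N L \<longleftrightarrow> (\<exists>(f::pt \<Rightarrow> real) c. linear f \<and> f \<noteq> (\<lambda>_. 0) \<and> L = {y. f y = c} \<and>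
      L \<inter> unit_ball N \<noteq> {} \<and> (\<forall>y \<in> unit_ball N. f y \<le> c))"

definition smooth_norm :: "(pt \<Rightarrow> real) \<Rightarrow> bool" where
  "smooth_norm N \<longleftrightarrow> (\<forall>x. N x = 1 \<longrightarrow> (\<exists>!L. supporting_line N L \<and> x \<in> L))"

definition proper_exposed_face :: "(pt \<Rightarrow> real) \<Rightarrow> pt set \<Rightarrow> bool" where
  "proper_exposed_face N F \<longleftrightarrow> (\<exists>L. supporting_line N L \<and> F = unit_ball N \<inter> L)"

definition FT :: "(pt \<Rightarrow> real) \<Rightarrow> pt set \<Rightarrow> pt set" where
  "FT N A = {x. \<forall>z. (\<Sum>a\<in>A. N (x - a)) \<le> (\<Sum>a\<in>A. N (z - a))}"

definition double_cluster :: "(pt \<Rightarrow> real) \<Rightarrow> pt set \<Rightarrow> bool" where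
  "double_cluster N C \<longleftrightarrow> (\<exists>m x y. C = x ` {..<m} \<union> y ` {..<m} \<and> card C = 2 * m \<and>
      (\<exists>F. proper_exposed_face N F \<and>
         (\<forall>i<m. (1 / N (x i - y i)) *\<^sub>R (x i - y i) \<in> F)))"

definition pseudo_double_cluster :: "(pt \<Rightarrow> real) \<Rightarrow> pt set \<Rightarrow> bool" where
  "pseudo_double_cluster N A \<longleftrightarrow> (\<exists>C c p. double_cluster N C \<and> c \<in> FT N C \<and> A = C \<union> {c, p})"

end

theory Submission
  imports Defs
begin

text \<open>
  Let x be a Fermat--Torricelli point of A on the boundary of its convex hull, zeta an outer
  normal of a supporting line at x, e a unit vector along that line and psi the norming functional
  of e.  By smoothness every x - a with a \<noteq> x has a unique norming functional J a, and
  minimality of x yields the first-order condition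
  \<open>(\<Sum>a\<noteq>x. J a \<bullet> v) + [x \<in> A] N v \<ge> 0\<close> for all v.
  Since A lies on one side of the supporting line, all J a lie on the upper half (towards zeta) of
  the unit circle of the dual norm, whose endpoints are psi and -psi.

  If x \<notin> A, the J a sum to zero, hence all lie at the endpoints, equally often at each:
  A is a double cluster.  If x \<in> A, there are oddly many J a; testing the first-order condition
  at a vector normed by their median (ordered by the value at e) forces all J a above the median
  to be psi and all below it to be -psi.  These points form a double cluster with
  Fermat--Torricelli point x, and the median point is the additional point.
\<close>

section \<open>Norms on the plane\<close>

locale plane_norm =
  fixes N :: "pt \<Rightarrow> real"
  assumes is_norm: "is_norm N"
begin

lemma N_eq_0_iff [simp]: "N x = 0 \<longleftrightarrow> x = 0"
  using is_norm by (simp add: is_norm_def)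

lemma N_scaleR: "N (c *\<^sub>R x) = \<bar>c\<bar> * N x"
  using is_norm by (simp add: is_norm_def)

lemma N_triangle: "N (x + y) \<le> N x + N y"
  using is_norm by (simp add: is_norm_def)

lemma N_zero [simp]: "N 0 = 0"
  by simp

lemma N_minus [simp]: "N (- x) = N x"
  using N_scaleR [of "-1" x] by simp

lemma N_nonneg: "0 \<le> N x"
  using N_triangle [of x "- x"] by simp

lemma N_pos: "x \<noteq> 0 \<Longrightarrow> 0 < N x"
  using N_nonneg [of x] by (simp add: less_le)

lemma N_triangle_diff: "N (x - y) \<le> N x + N y"
  using N_triangle [of x "- y"] by simp

lemma N_reverse_triangle: "\<bar>N x - N y\<bar> \<le> N (x - y)"
  using N_triangle [of "x - y" y] N_triangle [of "y - x" x] N_minus [of "x - y"] by simp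

lemma N_le_euclidean: "N x \<le> (N (axis 1 1) + N (axis 2 1)) * norm x"
proof -
  have "x = (x$1) *\<^sub>R axis 1 1 + (x$2) *\<^sub>R axis 2 (1::real)"
    by (simp add: vec_eq_iff forall_2 axis_def)
  then have "N x \<le> \<bar>x$1\<bar> * N (axis 1 1) + \<bar>x$2\<bar> * N (axis 2 1)"
    by (metis N_scaleR N_triangle)
  also have "\<dots> \<le> norm x * N (axis 1 1) + norm x * N (axis 2 1)"
    by (intro add_mono mult_right_mono) (auto simp: N_nonneg component_le_norm_cart)
  finally show ?thesis
    by (simp add: algebra_simps)
qed

lemma tendsto_N:
  assumes "(f \<longlongrightarrow> l) F"
  shows "((\<lambda>n. N (f n)) \<longlongrightarrow> N l) F"
proof -
  have "((\<lambda>n. N (f n) - N l) \<longlongrightarrow> 0) F"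
  proof (rule tendsto_0_le [where K = "N (axis 1 1) + N (axis 2 1)"])
    show "((\<lambda>n. f n - l) \<longlongrightarrow> 0) F"
      using assms by (simp add: LIM_zero)
    show "\<forall>\<^sub>F n in F. norm (N (f n) - N l) \<le> norm (f n - l) * (N (axis 1 1) + N (axis 2 1))"
      using order_trans [OF N_reverse_triangle N_le_euclidean]
      by (intro always_eventually allI) (simp add: mult.commute)
  qed
  then show ?thesis
    by (simp add: LIM_zero_iff)
qed

lemma convex_N_less: "convex {y. N y < r}"
proof (rule convexI)
  fix x y :: pt and s t :: real
  assume "x \<in> {y. N y < r}" "y \<in> {y. N y < r}" "0 \<le> s" "0 \<le> t" "s + t = 1"
  then have "s * N x + t * N y < s * r + t * r"
  proof (cases "s = 0")
    case False
    with \<open>0 \<le> s\<close> have "s * N x < s * r"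
      using \<open>x \<in> {y. N y < r}\<close> by simp
    moreover have "t * N y \<le> t * r"
      using \<open>y \<in> {y. N y < r}\<close> \<open>0 \<le> t\<close> by (simp add: mult_left_mono)
    ultimately show ?thesis
      by linarith
  qed (use \<open>s + t = 1\<close> \<open>y \<in> {y. N y < r}\<close> in simp)
  then have "s * N x + t * N y < r"
    using \<open>s + t = 1\<close> by (simp add: distrib_right [symmetric])
  then show "s *\<^sub>R x + t *\<^sub>R y \<in> {y. N y < r}"
    using N_triangle [of "s *\<^sub>R x" "t *\<^sub>R y"] \<open>0 \<le> s\<close> \<open>0 \<le> t\<close> by (simp add: N_scaleR)
qed

end

section \<open>Norming functionals\<close>

text \<open>Linear functionals on the plane are represented by vectors via the inner product; g is
  norming for u if it has dual norm at most 1 and attains N u at u.\<close>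

definition norming :: "(pt \<Rightarrow> real) \<Rightarrow> pt \<Rightarrow> pt \<Rightarrow> bool" where
  "norming N u g \<longleftrightarrow> (\<forall>y. g \<bullet> y \<le> N y) \<and> g \<bullet> u = N u"

context plane_norm
begin

lemma separating_inner_mult_le:
  assumes "u \<noteq> 0" and ab: "\<forall>y\<in>{y. N y < N u}. a \<bullet> y \<le> b" and "b \<le> a \<bullet> u"
  shows "(a \<bullet> y) * N u \<le> (a \<bullet> u) * N y"
proof (cases "y = 0")
  case False
  have "(N u / N y) * (a \<bullet> y) \<le> a \<bullet> u"
  proof (rule field_le_mult_one_interval)
    fix s :: real
    assume "0 < s" "s < 1"
    then have "N ((s * (N u / N y)) *\<^sub>R y) < N u"
      using False N_pos [of y] N_pos [of u] \<open>u \<noteq> 0\<close> by (simp add: N_scaleR)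
    then have "s * (N u / N y) * (a \<bullet> y) \<le> b"
      using ab by (simp only: inner_scaleR_right [symmetric]) blast
    then show "s * (N u / N y * (a \<bullet> y)) \<le> a \<bullet> u"
      using \<open>b \<le> a \<bullet> u\<close> by (simp add: mult.assoc)
  qed
  then show ?thesis
    using N_pos [OF False] by (simp add: field_simps)
qed simp

lemma norming_exists: "\<exists>g. norming N u g"
proof (cases "u = 0")
  case True
  then show ?thesis
    by (auto simp: norming_def N_nonneg intro: exI [of _ 0])
next
  case False
  have "convex {y. N y < N u}"
    by (rule convex_N_less)
  moreover have "0 \<in> {y. N y < N u}"
    using N_pos [OF False] by simp
  ultimately obtain a b where a: "a \<noteq> 0" and ab: "\<forall>y\<in>{y. N y < N u}. a \<bullet> y \<le> b"
    and "\<forall>y\<in>{u}. b \<le> a \<bullet> y"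
    using separating_hyperplane_sets [OF _ convex_singleton, of _ u] by blast
  then have le: "(a \<bullet> y) * N u \<le> (a \<bullet> u) * N y" for y
    using separating_inner_mult_le [OF False ab] by simp
  have "0 < a \<bullet> u"
  proof (rule ccontr)
    assume "\<not> 0 < a \<bullet> u"
    then have "(a \<bullet> a) * N u \<le> 0"
      using le [of a] N_nonneg [of a] by (meson mult_nonpos_nonneg not_less order_trans)
    then have "a \<bullet> a \<le> 0"
      using N_pos [OF \<open>u \<noteq> 0\<close>] by (simp add: mult_le_0_iff)
    then show False
      using a inner_gt_zero_iff [of a] by linarith
  qed
  then have "norming N u ((N u / (a \<bullet> u)) *\<^sub>R a)"
    using le by (simp add: norming_def field_simps)
  then show ?thesis ..
qed

lemma norming_abs_le:
  assumes "norming N u g"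
  shows "\<bar>g \<bullet> y\<bar> \<le> N y"
proof -
  have "g \<bullet> y \<le> N y" "g \<bullet> (- y) \<le> N (- y)"
    using assms by (simp_all only: norming_def)
  then show ?thesis
    by (simp add: abs_le_iff)
qed

lemma bounded_dual_ball: "bounded {g. \<forall>y. g \<bullet> y \<le> N y}"
proof -
  have "norm g \<le> N (axis 1 1) + N (axis 2 1)" if "\<forall>y. g \<bullet> y \<le> N y" for g
  proof -
    have "norm g * norm g \<le> (N (axis 1 1) + N (axis 2 1)) * norm g"
      using that order_trans [OF _ N_le_euclidean [of g]]
      by (simp add: power2_eq_square [symmetric] power2_norm_eq_inner)
    then show ?thesis
      by (cases "g = 0") (auto simp: N_nonneg)
  qed
  then show ?thesis
    unfolding bounded_iff by blast
qed

lemma norming_scaleR: "0 < c \<Longrightarrow> norming N u g \<Longrightarrow> norming N (c *\<^sub>R u) g"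
  by (simp add: norming_def N_scaleR)

lemma norming_uminus:
  assumes "norming N u g"
  shows "norming N (- u) (- g)"
  unfolding norming_def
proof (intro conjI allI)
  fix y
  have "g \<bullet> (- y) \<le> N (- y)"
    using assms by (simp only: norming_def)
  then show "- g \<bullet> y \<le> N y"
    by simp
qed (use assms in \<open>simp add: norming_def\<close>)

lemma norming_tendsto:
  assumes "F \<noteq> bot" and "(f \<longlongrightarrow> u) F" and "(g \<longlongrightarrow> G) F"
    and "\<forall>\<^sub>F n in F. norming N (f n) (g n)"
  shows "norming N u G"
  unfolding norming_def
proof (intro conjI allI)
  show "G \<bullet> y \<le> N y" for y
    using assms by (intro tendsto_upperbound [of "\<lambda>n. g n \<bullet> y"] tendsto_intros)
      (auto simp: norming_def elim: eventually_mono)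
  have "\<forall>\<^sub>F n in F. N (f n) = g n \<bullet> f n"
    using assms(4) by (auto simp: norming_def elim: eventually_mono)
  then have "((\<lambda>n. g n \<bullet> f n) \<longlongrightarrow> N u) F"
    using tendsto_N [OF assms(2)] by (rule Lim_transform_eventually [rotated])
  moreover have "((\<lambda>n. g n \<bullet> f n) \<longlongrightarrow> G \<bullet> u) F"
    using assms(2,3) by (intro tendsto_intros)
  ultimately show "G \<bullet> u = N u"
    using tendsto_unique [OF assms(1)] by blast
qed

lemma supporting_line_norming:
  assumes "norming N u g" and "N u = 1"
  shows "supporting_line N {y. g \<bullet> y = 1}"
  unfolding supporting_line_def
proof (intro exI conjI)
  show "linear ((\<bullet>) g)"
    by (simp add: linear_iff inner_add_right)
  show "(\<bullet>) g \<noteq> (\<lambda>_. 0)"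
    using assms by (metis norming_def zero_neq_one)
  show "{y. g \<bullet> y = 1} \<inter> unit_ball N \<noteq> {}"
    using assms by (auto simp: unit_ball_def norming_def)
  show "\<forall>y\<in>unit_ball N. g \<bullet> y \<le> 1"
    using assms by (auto simp: unit_ball_def norming_def intro: order_trans)
qed (rule refl)

lemma not_norming_strict_combination:
  assumes "\<forall>y. G \<bullet> y \<le> N y" and "\<forall>y. H \<bullet> y \<le> c * N y" and "c < 1"
    and "0 \<le> s" and "s < 1" and "u \<noteq> 0"
  shows "\<not> norming N u (s *\<^sub>R G + (1 - s) *\<^sub>R H)"
proof
  assume "norming N u (s *\<^sub>R G + (1 - s) *\<^sub>R H)"
  then have "N u = s * (G \<bullet> u) + (1 - s) * (H \<bullet> u)"
    by (simp add: norming_def inner_add_left)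
  also have "\<dots> \<le> s * N u + (1 - s) * (c * N u)"
    using assms by (intro add_mono mult_left_mono) auto
  also have "\<dots> < s * N u + (1 - s) * N u"
    using N_pos [OF \<open>u \<noteq> 0\<close>] \<open>c < 1\<close> \<open>s < 1\<close> by (intro add_strict_left_mono mult_strict_left_mono) auto
  finally show False
    by (simp add: algebra_simps)
qed

lemma FT_if_sum_norming_eq_0:
  assumes "finite C" and g: "\<And>c. c \<in> C \<Longrightarrow> norming N (x - c) (g c)" and "(\<Sum>c\<in>C. g c) = 0"
  shows "x \<in> FT N C"
  unfolding FT_def
proof (intro CollectI allI)
  fix y
  have "(\<Sum>c\<in>C. N (x - c)) = (\<Sum>c\<in>C. g c) \<bullet> (y - x) + (\<Sum>c\<in>C. g c \<bullet> (x - c))"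
    using g assms(3) by (simp add: norming_def)
  also have "\<dots> = (\<Sum>c\<in>C. g c \<bullet> (y - c))"
    by (simp add: inner_sum_left inner_diff_right sum_subtractf)
  also have "\<dots> \<le> (\<Sum>c\<in>C. N (y - c))"
    using g by (intro sum_mono) (simp add: norming_def)
  finally show "(\<Sum>c\<in>C. N (x - c)) \<le> (\<Sum>c\<in>C. N (y - c))" .
qed

end

locale smooth_plane_norm = plane_norm +
  assumes smooth: "smooth_norm N"
begin

lemma norming_unique:
  assumes "u \<noteq> 0" and g1: "norming N u g1" and g2: "norming N u g2"
  shows "g1 = g2"
proof -
  define e where "e = (1 / N u) *\<^sub>R u"
  have "N e = 1"
    using \<open>u \<noteq> 0\<close> by (simp add: e_def N_scaleR N_nonneg)
  have e: "norming N e g1" "norming N e g2"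
    using g1 g2 N_pos [OF \<open>u \<noteq> 0\<close>] by (simp_all add: e_def norming_scaleR)
  then have "g1 \<bullet> e = 1" "g2 \<bullet> e = 1"
    using \<open>N e = 1\<close> by (simp_all add: norming_def)
  moreover obtain L where L: "\<And>L'. supporting_line N L' \<and> e \<in> L' \<Longrightarrow> L' = L"
    using smooth \<open>N e = 1\<close> unfolding smooth_norm_def by metis
  ultimately have "{y. g1 \<bullet> y = 1} = L" "{y. g2 \<bullet> y = 1} = L"
    using L [of "{y. g1 \<bullet> y = 1}"] L [of "{y. g2 \<bullet> y = 1}"]
      supporting_line_norming [OF e(1) \<open>N e = 1\<close>] supporting_line_norming [OF e(2) \<open>N e = 1\<close>]
    by simp_all
  then have lines: "{y. g1 \<bullet> y = 1} = {y. g2 \<bullet> y = 1}"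
    by simp
  have "g1 \<bullet> y = g2 \<bullet> y" for y
  proof -
    have "g1 \<bullet> (e + y - (g1 \<bullet> y) *\<^sub>R e) = 1"
      using \<open>g1 \<bullet> e = 1\<close> by (simp add: inner_diff_right inner_add_right)
    then have "g2 \<bullet> (e + y - (g1 \<bullet> y) *\<^sub>R e) = 1"
      using lines by blast
    then show ?thesis
      using \<open>g2 \<bullet> e = 1\<close> by (simp add: inner_diff_right inner_add_right)
  qed
  then show ?thesis
    using vector_eq_rdot by blast
qed

lemma dual_ball_inner_less:
  assumes "u \<noteq> 0" and "norming N u g" and "\<forall>y. h \<bullet> y \<le> N y" and "h \<noteq> g"
  shows "h \<bullet> u < N u"
proof -
  have "\<not> norming N u h"
    using norming_unique [OF assms(1) _ assms(2)] assms(4) by blast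
  then show ?thesis
    using assms(3) by (auto simp: norming_def less_le)
qed

text \<open>Upper semicontinuity of the norming functional, from compactness of the dual ball and
  uniqueness of norming functionals.\<close>

lemma eventually_norming_inner_le:
  assumes "u \<noteq> 0" and g: "norming N u g" and "0 < \<epsilon>"
  shows "\<forall>\<^sub>F t in at_right 0. \<forall>h. norming N (u + t *\<^sub>R v) h \<longrightarrow> h \<bullet> v \<le> g \<bullet> v + \<epsilon>"
proof (rule ccontr)
  assume "\<not> ?thesis"
  then have "\<forall>n::nat. \<exists>t>0. t < 1 / Suc n \<and> (\<exists>h. norming N (u + t *\<^sub>R v) h \<and> g \<bullet> v + \<epsilon> < h \<bullet> v)"
    unfolding eventually_at_right_field by (auto simp: not_le)
  then obtain t h where t: "\<And>n. 0 < t n" "\<And>n. t n < 1 / Suc n"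
    and h: "\<And>n. norming N (u + t n *\<^sub>R v) (h n)" "\<And>n. g \<bullet> v + \<epsilon> < h n \<bullet> v"
    by metis
  have "bounded (range h)"
    using bounded_dual_ball by (rule bounded_subset) (use h(1) in \<open>auto simp: norming_def\<close>)
  then obtain G r where "strict_mono r" and hr: "(h \<circ> r) \<longlonglongrightarrow> G"
    using bounded_imp_convergent_subsequence by blast
  have "t \<longlonglongrightarrow> 0"
  proof (rule tendsto_sandwich [of "\<lambda>_. 0" _ _ "\<lambda>n. 1 / Suc n"])
    show "(\<lambda>n. 1 / real (Suc n)) \<longlonglongrightarrow> 0"
      using LIMSEQ_Suc [OF lim_const_over_n [of 1]] by simp
  qed (use t in \<open>auto intro: always_eventually less_imp_le\<close>)
  then have "(\<lambda>n. u + t (r n) *\<^sub>R v) \<longlonglongrightarrow> u"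
    using LIMSEQ_subseq_LIMSEQ [OF _ \<open>strict_mono r\<close>] by (auto intro!: tendsto_eq_intros simp: o_def)
  then have "norming N u G"
    using hr h(1) by (intro norming_tendsto [OF trivial_limit_sequentially]) (auto simp: o_def)
  then have "G = g"
    using norming_unique [OF \<open>u \<noteq> 0\<close> _ g] by blast
  moreover have "g \<bullet> v + \<epsilon> \<le> G \<bullet> v"
    using hr h(2) by (intro tendsto_lowerbound [of "\<lambda>n. h (r n) \<bullet> v"] tendsto_intros)
      (auto simp: o_def less_imp_le)
  ultimately show False
    using \<open>0 < \<epsilon>\<close> by simp
qed

lemma eventually_N_add_le:
  assumes "u \<noteq> 0" and "norming N u g" and "0 < \<epsilon>"
  shows "\<forall>\<^sub>F t in at_right 0. N (u + t *\<^sub>R v) \<le> N u + t * (g \<bullet> v + \<epsilon>)"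
  using eventually_conj [OF eventually_at_right_less eventually_norming_inner_le [OF assms, of v]]
proof (rule eventually_mono, safe)
  fix t :: real
  assume "0 < t" and le: "\<forall>h. norming N (u + t *\<^sub>R v) h \<longrightarrow> h \<bullet> v \<le> g \<bullet> v + \<epsilon>"
  obtain h where h: "norming N (u + t *\<^sub>R v) h"
    using norming_exists by blast
  then have "N (u + t *\<^sub>R v) = h \<bullet> u + t * (h \<bullet> v)"
    by (simp add: norming_def inner_add_right)
  also have "\<dots> \<le> N u + t * (g \<bullet> v + \<epsilon>)"
    using h le \<open>0 < t\<close> by (intro add_mono mult_left_mono) (auto simp: norming_def)
  finally show "N (u + t *\<^sub>R v) \<le> N u + t * (g \<bullet> v + \<epsilon>)" .
qed

text \<open>The one-sided directional derivative of the Fermat--Torricelli sum at a minimiser is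
  nonnegative.\<close>

lemma FT_first_order:
  assumes "finite A" and "x \<in> FT N A"
    and J: "\<And>a. a \<in> A - {x} \<Longrightarrow> norming N (x - a) (J a)"
  shows "0 \<le> (\<Sum>a\<in>A - {x}. J a \<bullet> v) + (if x \<in> A then N v else 0)" (is "0 \<le> ?S")
proof (rule field_le_epsilon)
  fix \<epsilon> :: real
  assume "0 < \<epsilon>"
  define \<delta> where "\<delta> = \<epsilon> / (card A + 1)"
  have "0 < \<delta>"
    using \<open>0 < \<epsilon>\<close> by (simp add: \<delta>_def)
  have "\<forall>\<^sub>F t in at_right 0. 0 < t \<and>
      (\<forall>a\<in>A - {x}. N (x - a + t *\<^sub>R v) \<le> N (x - a) + t * (J a \<bullet> v + \<delta>))"
    using assms(1) \<open>0 < \<delta>\<close> J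
    by (intro eventually_conj eventually_at_right_less eventually_ball_finite ballI eventually_N_add_le)
      auto
  then obtain t where "0 < t"
    and t: "\<And>a. a \<in> A - {x} \<Longrightarrow> N (x - a + t *\<^sub>R v) \<le> N (x - a) + t * (J a \<bullet> v + \<delta>)"
    using eventually_happens' [OF trivial_limit_at_right_real] by blast
  have split: "(\<Sum>a\<in>A. N (y - a)) = (\<Sum>a\<in>A - {x}. N (y - a)) + (if x \<in> A then N (y - x) else 0)" for y
    using sum_diff1 [OF assms(1), of "\<lambda>a. N (y - a)" x] by auto
  have "(\<Sum>a\<in>A - {x}. N (x - a)) = (\<Sum>a\<in>A. N (x - a))"
    using split [of x] by simp
  also have "\<dots> \<le> (\<Sum>a\<in>A. N (x + t *\<^sub>R v - a))"
    using assms(2) by (simp add: FT_def)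
  also have "\<dots> = (\<Sum>a\<in>A - {x}. N (x - a + t *\<^sub>R v)) + (if x \<in> A then t * N v else 0)"
    using \<open>0 < t\<close> by (simp add: split N_scaleR algebra_simps)
  also have "\<dots> \<le> (\<Sum>a\<in>A - {x}. N (x - a) + t * (J a \<bullet> v + \<delta>)) + (if x \<in> A then t * N v else 0)"
    using t by (intro add_mono sum_mono) auto
  also have "\<dots> = (\<Sum>a\<in>A - {x}. N (x - a)) + t * (?S + card (A - {x}) * \<delta>)"
    by (simp add: sum.distrib sum_distrib_left algebra_simps)
  finally have "0 \<le> ?S + card (A - {x}) * \<delta>"
    using \<open>0 < t\<close> by (simp add: zero_le_mult_iff)
  moreover have "card (A - {x}) * \<delta> \<le> (card A + 1) * \<delta>"
    using card_Diff1_le [of A x] \<open>0 < \<delta>\<close> by (intro mult_right_mono) auto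
  moreover have "(card A + 1) * \<delta> = \<epsilon>"
    by (simp add: \<delta>_def)
  ultimately show "0 \<le> ?S + \<epsilon>"
    by linarith
qed

end

section \<open>A frame adapted to a supporting line\<close>

lemma frontier_convex_supporting:
  fixes S :: "'a::euclidean_space set"
  assumes "convex S" and "x \<in> frontier S"
  obtains a where "a \<noteq> 0" and "\<And>y. y \<in> S \<Longrightarrow> a \<bullet> y \<le> a \<bullet> x"
proof (cases "interior S = {}")
  case True
  then obtain a b where "a \<noteq> 0" and S: "S \<subseteq> {y. a \<bullet> y = b}"
    using empty_interior_subset_hyperplane [OF assms(1)] by blast
  moreover have "a \<bullet> x = b"
    using closure_minimal [OF S closed_hyperplane] assms(2) by (auto simp: frontier_def)
  then have "\<And>y. y \<in> S \<Longrightarrow> a \<bullet> y \<le> a \<bullet> x"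
    using S by auto
  then show ?thesis
    using that \<open>a \<noteq> 0\<close> by blast
next
  case False
  then have "x \<notin> rel_interior S" and "x \<in> closure S"
    using assms(2) rel_interior_nonempty_interior by (auto simp: frontier_def)
  then obtain a where "a \<noteq> 0" and "\<And>y. y \<in> closure S \<Longrightarrow> a \<bullet> x \<le> a \<bullet> y"
    using supporting_hyperplane_relative_frontier [OF assms(1)] by metis
  then show ?thesis
    using that [of "- a"] closure_subset by auto
qed

lemma eq_0_if_inner_eq_0_pair:
  fixes h p e d :: pt
  assumes "h \<noteq> 0" and "h \<bullet> e = 0" and "p \<bullet> e \<noteq> 0" and "h \<bullet> d = 0" and "p \<bullet> d = 0"
  shows "d = 0"
proof -
  define det where "det = h$1 * p$2 - h$2 * p$1"
  have inner: "u \<bullet> w = u$1 * w$1 + u$2 * w$2" for u w :: pt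
    by (simp add: inner_vec_def sum_2)
  have "(p \<bullet> e) * h$1 = det * e$2" "(p \<bullet> e) * h$2 = - det * e$1"
    using assms(2) unfolding inner det_def by algebra+
  then have "det \<noteq> 0"
    using assms(1,3) by (auto simp: vec_eq_iff forall_2)
  moreover have "det * d$1 = 0" "det * d$2 = 0"
    using assms(4,5) unfolding inner det_def by algebra+
  ultimately show "d = 0"
    by (simp add: vec_eq_iff forall_2)
qed

text \<open>A basis e, z with dual basis psi, zeta, where e is a unit vector with norming functional psi.
  It is built from a supporting line of the convex hull with outer normal zeta and direction e.\<close>

locale norm_frame = smooth_plane_norm +
  fixes e z psi zeta :: pt
  assumes N_e: "N e = 1" and norming_e: "norming N e psi"
    and psi_z: "psi \<bullet> z = 0" and zeta_e: "zeta \<bullet> e = 0" and zeta_z: "zeta \<bullet> z = 1"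
    and coordinates: "u = (psi \<bullet> u) *\<^sub>R e + (zeta \<bullet> u) *\<^sub>R z"

lemma (in smooth_plane_norm) exists_norm_frame:
  assumes "h \<noteq> 0"
  obtains e z psi zeta c where "norm_frame N e z psi zeta" and "0 < c" and "zeta = c *\<^sub>R h"
proof -
  define rot :: "pt \<Rightarrow> pt" where "rot v = (\<chi> i. if i = 1 then - v$2 else v$1)" for v
  have rot: "v \<bullet> rot v = 0" "rot v = 0 \<longleftrightarrow> v = 0" for v
    by (auto simp: rot_def inner_vec_def sum_2 vec_eq_iff forall_2)
  define e where "e = (1 / N (rot h)) *\<^sub>R rot h"
  have "N e = 1" and "h \<bullet> e = 0"
    using rot [of h] \<open>h \<noteq> 0\<close> by (simp_all add: e_def N_scaleR N_nonneg)
  obtain psi where psi: "norming N e psi"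
    using norming_exists by blast
  then have "psi \<bullet> e = 1"
    using \<open>N e = 1\<close> by (simp add: norming_def)
  then have "h \<bullet> rot psi \<noteq> 0"
    using eq_0_if_inner_eq_0_pair [OF \<open>h \<noteq> 0\<close> \<open>h \<bullet> e = 0\<close>, of psi "rot psi"] rot [of psi] by auto
  define z where "z = (if 0 < h \<bullet> rot psi then rot psi else - rot psi)"
  have "0 < h \<bullet> z" and "psi \<bullet> z = 0"
    using \<open>h \<bullet> rot psi \<noteq> 0\<close> rot [of psi] by (auto simp: z_def)
  define zeta where "zeta = (1 / (h \<bullet> z)) *\<^sub>R h"
  have coordinates: "u = (psi \<bullet> u) *\<^sub>R e + (zeta \<bullet> u) *\<^sub>R z" for u
  proof -
    have "u - (psi \<bullet> u) *\<^sub>R e - (zeta \<bullet> u) *\<^sub>R z = 0"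
      using \<open>h \<bullet> e = 0\<close> \<open>psi \<bullet> e = 1\<close> \<open>psi \<bullet> z = 0\<close> \<open>0 < h \<bullet> z\<close>
      by (intro eq_0_if_inner_eq_0_pair [OF \<open>h \<noteq> 0\<close> \<open>h \<bullet> e = 0\<close>, of psi])
        (simp_all add: zeta_def inner_diff_right)
    then show ?thesis
      by (simp add: algebra_simps)
  qed
  have "zeta \<bullet> e = 0" "zeta \<bullet> z = 1"
    using \<open>h \<bullet> e = 0\<close> \<open>0 < h \<bullet> z\<close> by (simp_all add: zeta_def)
  then have "norm_frame N e z psi zeta"
    using \<open>N e = 1\<close> psi \<open>psi \<bullet> z = 0\<close>
    by unfold_locales (simp_all add: smooth coordinates [symmetric])
  then show ?thesis
    using that \<open>0 < h \<bullet> z\<close> zeta_def by auto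
qed

definition upper_dual_unit :: "(pt \<Rightarrow> real) \<Rightarrow> pt \<Rightarrow> pt \<Rightarrow> bool" where
  "upper_dual_unit N z g \<longleftrightarrow> (\<exists>u. u \<noteq> 0 \<and> norming N u g) \<and> 0 \<le> g \<bullet> z"

context norm_frame
begin

lemma psi_e [simp]: "psi \<bullet> e = 1"
  using norming_e N_e by (simp add: norming_def)

lemma e_nonzero: "e \<noteq> 0"
  using N_e by auto

lemma dual_coordinates: "g = (g \<bullet> e) *\<^sub>R psi + (g \<bullet> z) *\<^sub>R zeta"
proof -
  have "g \<bullet> u = ((g \<bullet> e) *\<^sub>R psi + (g \<bullet> z) *\<^sub>R zeta) \<bullet> u" for u
    by (subst (1) coordinates) (simp add: inner_add_right inner_add_left algebra_simps)
  then show ?thesis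
    using vector_eq_rdot by blast
qed

lemma norm_frame_reflect: "norm_frame N (- e) z (- psi) zeta"
  using N_e norming_uminus [OF norming_e] psi_z zeta_e zeta_z
  by unfold_locales (simp_all add: smooth coordinates [symmetric])

lemma inner_dual_coordinates: "g \<bullet> u = (g \<bullet> e) * (psi \<bullet> u) + (g \<bullet> z) * (zeta \<bullet> u)"
  by (subst dual_coordinates) (simp add: inner_add_left)

lemma norming_inner_e_abs_le: "norming N u g \<Longrightarrow> \<bar>g \<bullet> e\<bar> \<le> 1"
  using norming_abs_le [of u g e] N_e by simp

lemma dual_ball_eq_psi: "\<forall>y. g \<bullet> y \<le> N y \<Longrightarrow> g \<bullet> e = 1 \<Longrightarrow> g = psi"
  using norming_unique [OF e_nonzero _ norming_e] N_e by (simp add: norming_def)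

lemma dual_ball_eq_uminus_psi: "\<forall>y. g \<bullet> y \<le> N y \<Longrightarrow> g \<bullet> e = - 1 \<Longrightarrow> g = - psi"
  using norm_frame.dual_ball_eq_psi [OF norm_frame_reflect] by simp

lemma dual_ball_eq_psi_if_abs_inner_e:
  assumes "\<forall>y. g \<bullet> y \<le> N y" and "\<bar>g \<bullet> e\<bar> = 1"
  shows "g = psi \<or> g = - psi"
proof (cases "0 \<le> g \<bullet> e")
  case True
  then show ?thesis
    using assms dual_ball_eq_psi by simp
next
  case False
  then show ?thesis
    using assms dual_ball_eq_uminus_psi by simp
qed

lemma upper_dual_unit_dual_ball: "upper_dual_unit N z g \<Longrightarrow> \<forall>y. g \<bullet> y \<le> N y"
  by (auto simp: upper_dual_unit_def norming_def)

lemma mult_inner_psi_le: "c * (psi \<bullet> y) \<le> \<bar>c\<bar> * N y"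
proof -
  have "c * (psi \<bullet> y) \<le> \<bar>c\<bar> * \<bar>psi \<bullet> y\<bar>"
    by (metis abs_ge_self abs_mult)
  also have "\<dots> \<le> \<bar>c\<bar> * N y"
    using norming_abs_le [OF norming_e] by (intro mult_left_mono) auto
  finally show ?thesis .
qed

lemma norming_inner_z_zeta_nonneg:
  assumes "norming N u g"
  shows "0 \<le> (g \<bullet> z) * (zeta \<bullet> u)"
proof -
  have "\<bar>g \<bullet> e\<bar> * N u \<le> 1 * N u"
    using norming_inner_e_abs_le [OF assms] N_nonneg [of u] by (rule mult_right_mono)
  then have "(g \<bullet> e) * (psi \<bullet> u) \<le> N u"
    using mult_inner_psi_le [of "g \<bullet> e" u] by simp
  then show ?thesis
    using assms inner_dual_coordinates [of g u] by (simp add: norming_def)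
qed

lemma eq_psi_if_inner_z_eq_0:
  assumes "u \<noteq> 0" and "norming N u g" and "g \<bullet> z = 0"
  shows "g = psi \<or> g = - psi"
proof -
  have "N u = (g \<bullet> e) * (psi \<bullet> u)"
    using assms(2,3) inner_dual_coordinates [of g u] by (simp add: norming_def)
  also have "\<dots> \<le> \<bar>g \<bullet> e\<bar> * N u"
    by (rule mult_inner_psi_le)
  finally have "1 \<le> \<bar>g \<bullet> e\<bar>"
    using N_pos [OF assms(1)] by simp
  then show ?thesis
    using norming_inner_e_abs_le [OF assms(2)] assms(2)
    by (intro dual_ball_eq_psi_if_abs_inner_e) (auto simp: norming_def)
qed

lemma upper_dual_unit_if_zeta_nonneg:
  assumes "u \<noteq> 0" and g: "norming N u g" and "0 \<le> zeta \<bullet> u"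
  shows "upper_dual_unit N z g"
proof (cases "zeta \<bullet> u = 0")
  case True
  define \<alpha> where "\<alpha> = psi \<bullet> u"
  have "u = \<alpha> *\<^sub>R e"
    using coordinates [of u] True by (simp add: \<alpha>_def)
  then have "\<alpha> * (g \<bullet> e) = \<bar>\<alpha>\<bar>" and "\<alpha> \<noteq> 0"
    using g N_e \<open>u \<noteq> 0\<close> by (auto simp: norming_def N_scaleR)
  then have "\<bar>g \<bullet> e\<bar> = 1"
    by (metis abs_abs abs_mult mult_cancel_left2 abs_eq_0)
  then have "g = psi \<or> g = - psi"
    using g by (intro dual_ball_eq_psi_if_abs_inner_e) (auto simp: norming_def)
  then have "g \<bullet> z = 0"
    using psi_z by auto
  then show ?thesis
    using assms(1,2) by (auto simp: upper_dual_unit_def)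
next
  case False
  then have "0 \<le> g \<bullet> z"
    using norming_inner_z_zeta_nonneg [OF g] \<open>0 \<le> zeta \<bullet> u\<close> by (simp add: zero_le_mult_iff)
  then show ?thesis
    using assms(1,2) by (auto simp: upper_dual_unit_def)
qed

lemma exists_norming_zeta_nonneg:
  assumes "upper_dual_unit N z g"
  obtains w where "w \<noteq> 0" and "norming N w g" and "0 \<le> zeta \<bullet> w"
proof -
  obtain u where u: "u \<noteq> 0" "norming N u g" and "0 \<le> g \<bullet> z"
    using assms by (auto simp: upper_dual_unit_def)
  show ?thesis
  proof (cases "g \<bullet> z = 0")
    case True
    then have "g = psi \<or> g = - psi"
      using eq_psi_if_inner_z_eq_0 [OF u] by simp
    then show ?thesis
      using that [of e] that [of "- e"] norming_e norming_uminus [OF norming_e] e_nonzero zeta_e by auto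
  next
    case False
    then have "0 \<le> zeta \<bullet> u"
      using norming_inner_z_zeta_nonneg [OF u(2)] \<open>0 \<le> g \<bullet> z\<close> by (simp add: zero_le_mult_iff)
    then show ?thesis
      using that u by blast
  qed
qed

lemma upper_dual_unit_inner_z_maximal:
  assumes G: "\<forall>y. G \<bullet> y \<le> N y" and g: "upper_dual_unit N z g" and "G \<bullet> e = g \<bullet> e"
  shows "G \<bullet> z \<le> g \<bullet> z"
proof (rule ccontr)
  assume "\<not> G \<bullet> z \<le> g \<bullet> z"
  obtain u where "u \<noteq> 0" "norming N u g" and "0 \<le> g \<bullet> z"
    using g by (auto simp: upper_dual_unit_def)
  have "\<bar>g \<bullet> e\<bar> \<noteq> 1"
    using dual_ball_eq_psi_if_abs_inner_e [OF G] \<open>G \<bullet> e = g \<bullet> e\<close> \<open>\<not> G \<bullet> z \<le> g \<bullet> z\<close>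
      \<open>0 \<le> g \<bullet> z\<close> psi_z by auto
  then have "\<bar>g \<bullet> e\<bar> < 1"
    using norming_inner_e_abs_le [OF \<open>norming N u g\<close>] by simp
  define \<beta> where "\<beta> = G \<bullet> z"
  define s where "s = (g \<bullet> z) / \<beta>"
  have "0 \<le> s" "s < 1" and "s * \<beta> = g \<bullet> z"
    using \<open>\<not> G \<bullet> z \<le> g \<bullet> z\<close> \<open>0 \<le> g \<bullet> z\<close> by (auto simp: s_def \<beta>_def divide_simps)
  have G_coord: "G = (g \<bullet> e) *\<^sub>R psi + \<beta> *\<^sub>R zeta"
    using dual_coordinates [of G] \<open>G \<bullet> e = g \<bullet> e\<close> by (simp only: \<beta>_def)
  \<comment> \<open>g lies strictly between G and the point (g \<bullet> e) psi, which is inside the dual ball\<close>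
  have "s *\<^sub>R G + (1 - s) *\<^sub>R ((g \<bullet> e) *\<^sub>R psi) = (g \<bullet> e) *\<^sub>R psi + (s * \<beta>) *\<^sub>R zeta"
    by (simp add: G_coord scaleR_add_right flip: scaleR_add_left) (simp add: algebra_simps)
  also have "\<dots> = g"
    using \<open>s * \<beta> = g \<bullet> z\<close> dual_coordinates [of g, symmetric] by simp
  finally have "norming N u (s *\<^sub>R G + (1 - s) *\<^sub>R ((g \<bullet> e) *\<^sub>R psi))"
    using \<open>norming N u g\<close> by simp
  moreover have "\<forall>y. (g \<bullet> e) *\<^sub>R psi \<bullet> y \<le> \<bar>g \<bullet> e\<bar> * N y"
    by (simp add: mult_inner_psi_le)
  ultimately show False
    using not_norming_strict_combination [OF G _ \<open>\<bar>g \<bullet> e\<bar> < 1\<close> \<open>0 \<le> s\<close> \<open>s < 1\<close> \<open>u \<noteq> 0\<close>]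
    by blast
qed

lemma inner_le_upper_dual_unit:
  assumes "\<forall>y. G \<bullet> y \<le> N y" and "upper_dual_unit N z g" and "G \<bullet> e = g \<bullet> e" and "0 \<le> zeta \<bullet> w"
  shows "G \<bullet> w \<le> g \<bullet> w"
  using inner_dual_coordinates [of G w] inner_dual_coordinates [of g w]
    upper_dual_unit_inner_z_maximal [OF assms(1-3)] assms(3,4)
  by (simp add: mult_right_mono)

lemma upper_dual_unit_inner_ge_psi:
  assumes "w \<noteq> 0" and w: "norming N w g" and "0 \<le> zeta \<bullet> w"
    and h: "upper_dual_unit N z h" and "g \<bullet> e \<le> h \<bullet> e"
  shows "psi \<bullet> w \<le> h \<bullet> w" and "h \<bullet> w = psi \<bullet> w \<Longrightarrow> h = psi"
proof -
  obtain u where "norming N u h"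
    using h by (auto simp: upper_dual_unit_def)
  then have "h \<bullet> e \<le> 1"
    using norming_inner_e_abs_le by fastforce
  have strict: "psi \<bullet> w < h \<bullet> w" if "h \<bullet> e \<noteq> 1"
  proof -
    have "0 < 1 - h \<bullet> e" and "1 - h \<bullet> e \<le> 1 - g \<bullet> e"
      using that \<open>g \<bullet> e \<le> h \<bullet> e\<close> \<open>h \<bullet> e \<le> 1\<close> by simp_all
    \<comment> \<open>the point of the segment from psi to g with the same e-coordinate as h\<close>
    define t where "t = (1 - h \<bullet> e) / (1 - g \<bullet> e)"
    define G where "G = t *\<^sub>R g + (1 - t) *\<^sub>R psi"
    have "0 < t" "t \<le> 1" and t: "t * (1 - g \<bullet> e) = 1 - h \<bullet> e"
      using \<open>0 < 1 - h \<bullet> e\<close> \<open>1 - h \<bullet> e \<le> 1 - g \<bullet> e\<close> by (simp_all add: t_def)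
    have "G \<bullet> y \<le> N y" for y
      using convex_bound_le [of "g \<bullet> y" "N y" "psi \<bullet> y" t "1 - t"] w norming_e \<open>0 < t\<close> \<open>t \<le> 1\<close>
      by (simp add: G_def inner_add_left norming_def)
    moreover have "G \<bullet> e = h \<bullet> e"
      using t by (simp add: G_def inner_add_left algebra_simps)
    ultimately have "G \<bullet> w \<le> h \<bullet> w"
      using inner_le_upper_dual_unit [OF _ h _ \<open>0 \<le> zeta \<bullet> w\<close>] by blast
    have "psi \<noteq> g"
      using \<open>1 - h \<bullet> e \<le> 1 - g \<bullet> e\<close> \<open>0 < 1 - h \<bullet> e\<close> psi_e by (metis diff_self not_less)
    then have "psi \<bullet> w < N w"
      using dual_ball_inner_less [OF \<open>w \<noteq> 0\<close> w] norming_e by (simp add: norming_def)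
    then have "0 < t * (N w - psi \<bullet> w)"
      using \<open>0 < t\<close> by simp
    moreover have "G \<bullet> w = psi \<bullet> w + t * (N w - psi \<bullet> w)"
      using w by (simp add: G_def inner_add_left norming_def algebra_simps)
    ultimately show ?thesis
      using \<open>G \<bullet> w \<le> h \<bullet> w\<close> by linarith
  qed
  have "h = psi \<or> psi \<bullet> w < h \<bullet> w"
    using strict dual_ball_eq_psi [OF upper_dual_unit_dual_ball [OF h]] by blast
  then show "psi \<bullet> w \<le> h \<bullet> w" and "h \<bullet> w = psi \<bullet> w \<Longrightarrow> h = psi"
    by auto
qed

lemma upper_dual_unit_inner_ge_uminus_psi:
  assumes "w \<noteq> 0" and "norming N w g" and "0 \<le> zeta \<bullet> w"
    and "upper_dual_unit N z h" and "h \<bullet> e \<le> g \<bullet> e"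
  shows "- psi \<bullet> w \<le> h \<bullet> w" and "h \<bullet> w = - psi \<bullet> w \<Longrightarrow> h = - psi"
proof -
  have "g \<bullet> - e \<le> h \<bullet> - e"
    using assms(5) by simp
  then show "- psi \<bullet> w \<le> h \<bullet> w" and "h \<bullet> w = - psi \<bullet> w \<Longrightarrow> h = - psi"
    using norm_frame.upper_dual_unit_inner_ge_psi [OF norm_frame_reflect assms(1-4)] by blast+
qed

end

section \<open>Splitting the norming functionals\<close>

lemma median_split:
  fixes f :: "'a \<Rightarrow> 'b::linorder"
  assumes "finite S" and "card S = 2 * m + 1"
  obtains p U D where "S = insert p (U \<union> D)" and "p \<notin> U \<union> D" and "U \<inter> D = {}"
    and "card U = m" and "card D = m"
    and "\<And>a. a \<in> U \<Longrightarrow> f p \<le> f a" and "\<And>a. a \<in> D \<Longrightarrow> f a \<le> f p"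
proof -
  obtain xs where "set xs = S" and "distinct xs"
    using finite_distinct_list [OF assms(1)] by blast
  define ys where "ys = sort_key f xs"
  have ys: "set ys = S" "distinct ys" "sorted (map f ys)" "length ys = 2 * m + 1"
    using \<open>set xs = S\<close> \<open>distinct xs\<close> assms(2) distinct_card [of xs] by (auto simp: ys_def)
  have sorted: "f (ys ! i) \<le> f (ys ! j)" if "i \<le> j" "j < length ys" for i j
    using sorted_nth_mono [OF ys(3)] that by simp
  have split: "ys = take m ys @ ys ! m # drop (Suc m) ys"
    using ys(4) by (simp add: id_take_nth_drop)
  then have "distinct (take m ys @ ys ! m # drop (Suc m) ys)"
    using ys(2) by simp
  show ?thesis
  proof (rule that [of "ys ! m" "set (drop (Suc m) ys)" "set (take m ys)"])
    show "S = insert (ys ! m) (set (drop (Suc m) ys) \<union> set (take m ys))"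
      using ys(1) split by (metis Un_commute Un_insert_right list.simps(15) set_append)
    show "ys ! m \<notin> set (drop (Suc m) ys) \<union> set (take m ys)"
      and "set (drop (Suc m) ys) \<inter> set (take m ys) = {}"
      using \<open>distinct (take m ys @ ys ! m # drop (Suc m) ys)\<close> by auto
    show "card (set (drop (Suc m) ys)) = m" and "card (set (take m ys)) = m"
      using ys(2,4) by (simp_all add: distinct_card)
    show "f (ys ! m) \<le> f a" if "a \<in> set (drop (Suc m) ys)" for a
      using that ys(4) sorted [of m] by (auto simp: in_set_conv_nth)
    show "f a \<le> f (ys ! m)" if "a \<in> set (take m ys)" for a
      using that ys(4) sorted [of _ m] by (auto simp: in_set_conv_nth)
  qed
qed

context norm_frame
begin

lemma opposite_split_if_sum_eq_0:
  assumes "finite S" and G: "\<And>a. a \<in> S \<Longrightarrow> upper_dual_unit N z (G a)" and "(\<Sum>a\<in>S. G a) = 0"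
  obtains U D where "S = U \<union> D" and "U \<inter> D = {}" and "card U = card D"
    and "\<And>a. a \<in> U \<Longrightarrow> G a = psi" and "\<And>a. a \<in> D \<Longrightarrow> G a = - psi"
proof -
  have "(\<Sum>a\<in>S. G a \<bullet> z) = 0"
    using assms(3) by (simp add: inner_sum_left [symmetric])
  moreover have "0 \<le> G a \<bullet> z" if "a \<in> S" for a
    using G [OF that] by (simp add: upper_dual_unit_def)
  ultimately have "G a \<bullet> z = 0" if "a \<in> S" for a
    using sum_nonneg_eq_0_iff [OF assms(1), of "\<lambda>a. G a \<bullet> z"] that by simp
  then have pm: "G a = psi \<or> G a = - psi" if "a \<in> S" for a
    using eq_psi_if_inner_z_eq_0 G [OF that] that by (auto simp: upper_dual_unit_def)
  define U where "U = {a\<in>S. G a = psi}"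
  define D where "D = {a\<in>S. G a = - psi}"
  have "psi \<noteq> - psi"
  proof
    assume "psi = - psi"
    then have "psi \<bullet> e = (- psi) \<bullet> e"
      by (rule arg_cong)
    then show False
      by simp
  qed
  show ?thesis
  proof (rule that)
    show "S = U \<union> D"
      using pm by (auto simp: U_def D_def)
    show "U \<inter> D = {}"
      using \<open>psi \<noteq> - psi\<close> by (auto simp: U_def D_def)
    have "finite U" "finite D"
      using assms(1) by (simp_all add: U_def D_def)
    have "(\<Sum>a\<in>U. G a \<bullet> e) = (\<Sum>a\<in>U. 1)" and "(\<Sum>a\<in>D. G a \<bullet> e) = (\<Sum>a\<in>D. - 1)"
      by (rule sum.cong; simp add: U_def D_def)+
    then have "(\<Sum>a\<in>S. G a \<bullet> e) = real (card U) - real (card D)"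
      using \<open>S = U \<union> D\<close> \<open>U \<inter> D = {}\<close> \<open>finite U\<close> \<open>finite D\<close> by (simp add: sum.union_disjoint)
    then show "card U = card D"
      using assms(3) by (simp add: inner_sum_left [symmetric])
  qed (simp_all add: U_def D_def)
qed

text \<open>The median functional is attained at some w with nonnegative zeta-coordinate; on w the
  functionals above the median are at least psi, those below at least -psi, and the first-order
  condition leaves no room for any excess.\<close>

lemma opposite_split_if_sum_le:
  assumes "finite S" and "card S = 2 * m + 1"
    and G: "\<And>a. a \<in> S \<Longrightarrow> upper_dual_unit N z (G a)" and le: "\<And>w. (\<Sum>a\<in>S. G a \<bullet> w) \<le> N w"
  obtains p U D where "S = insert p (U \<union> D)" and "p \<notin> U \<union> D" and "U \<inter> D = {}"
    and "card U = card D" and "\<And>a. a \<in> U \<Longrightarrow> G a = psi" and "\<And>a. a \<in> D \<Longrightarrow> G a = - psi"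
proof -
  obtain p U D where S: "S = insert p (U \<union> D)" "p \<notin> U \<union> D" "U \<inter> D = {}" "card U = m" "card D = m"
    and above: "\<And>a. a \<in> U \<Longrightarrow> G p \<bullet> e \<le> G a \<bullet> e" and below: "\<And>a. a \<in> D \<Longrightarrow> G a \<bullet> e \<le> G p \<bullet> e"
    using median_split [OF assms(1,2), of "\<lambda>a. G a \<bullet> e"] by blast
  have "p \<in> S" and "finite U" and "finite D"
    using S(1) assms(1) by auto
  obtain w where w: "w \<noteq> 0" "norming N w (G p)" "0 \<le> zeta \<bullet> w"
    using exists_norming_zeta_nonneg [OF G [OF \<open>p \<in> S\<close>]] by blast
  have U: "psi \<bullet> w \<le> G a \<bullet> w" "G a \<bullet> w = psi \<bullet> w \<Longrightarrow> G a = psi" if "a \<in> U" for a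
    using upper_dual_unit_inner_ge_psi [OF w G above] that S(1) by blast+
  have D: "- psi \<bullet> w \<le> G a \<bullet> w" "G a \<bullet> w = - psi \<bullet> w \<Longrightarrow> G a = - psi" if "a \<in> D" for a
    using upper_dual_unit_inner_ge_uminus_psi [OF w G below] that S(1) by blast+
  have "(\<Sum>a\<in>S. G a \<bullet> w) = G p \<bullet> w + (\<Sum>a\<in>U. G a \<bullet> w) + (\<Sum>a\<in>D. G a \<bullet> w)"
    using S(1-3) \<open>finite U\<close> \<open>finite D\<close> by (simp add: sum.union_disjoint)
  moreover have "(\<Sum>a\<in>U. psi \<bullet> w) = (\<Sum>a\<in>D. psi \<bullet> w)"
    using S(4,5) by simp
  ultimately have "(\<Sum>a\<in>U. G a \<bullet> w - psi \<bullet> w) + (\<Sum>a\<in>D. G a \<bullet> w + psi \<bullet> w) \<le> 0"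
    using le [of w] w(2) S(4,5) by (simp add: sum_subtractf sum.distrib norming_def)
  moreover have nonneg_U: "0 \<le> G a \<bullet> w - psi \<bullet> w" if "a \<in> U" for a
    using U [OF that] by simp
  moreover have nonneg_D: "0 \<le> G a \<bullet> w + psi \<bullet> w" if "a \<in> D" for a
    using D [OF that] by simp
  ultimately have "(\<Sum>a\<in>U. G a \<bullet> w - psi \<bullet> w) = 0" and "(\<Sum>a\<in>D. G a \<bullet> w + psi \<bullet> w) = 0"
    using sum_nonneg [of U "\<lambda>a. G a \<bullet> w - psi \<bullet> w", OF nonneg_U]
      sum_nonneg [of D "\<lambda>a. G a \<bullet> w + psi \<bullet> w", OF nonneg_D]
    by linarith+
  then have "G a = psi" if "a \<in> U" for a
    using sum_nonneg_eq_0_iff [OF \<open>finite U\<close> nonneg_U] U that by auto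
  moreover have "G a = - psi" if "a \<in> D" for a
    using sum_nonneg_eq_0_iff [OF \<open>finite D\<close> nonneg_D] D that
      \<open>(\<Sum>a\<in>D. G a \<bullet> w + psi \<bullet> w) = 0\<close> by auto
  ultimately show ?thesis
    using that S by simp
qed

end

section \<open>Double clusters\<close>

lemma (in plane_norm) double_cluster_if_opposite_norming:
  assumes "norming N e psi" and "N e = 1" and "finite U" and "finite D" and "U \<inter> D = {}"
    and "card U = card D"
    and J: "\<And>a. norming N (x - a) (J a)"
    and U: "\<And>a. a \<in> U \<Longrightarrow> J a = psi" and D: "\<And>b. b \<in> D \<Longrightarrow> J b = - psi"
  shows "double_cluster N (U \<union> D)"
proof -
  obtain X where "bij_betw X {..<card U} D"
    using ex_bij_betw_nat_finite [OF \<open>finite D\<close>] \<open>card U = card D\<close> by (auto simp: atLeast0LessThan)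
  obtain Y where "bij_betw Y {..<card U} U"
    using ex_bij_betw_nat_finite [OF \<open>finite U\<close>] by (auto simp: atLeast0LessThan)
  define F where "F = unit_ball N \<inter> {y. psi \<bullet> y = 1}"
  have "proper_exposed_face N F"
    using supporting_line_norming [OF assms(1,2)] by (auto simp: proper_exposed_face_def F_def)
  moreover have "(1 / N (b - a)) *\<^sub>R (b - a) \<in> F" if "a \<in> U" and "b \<in> D" for a b
  proof -
    have "N (b - a) \<le> N (x - a) + N (x - b)"
      using N_triangle_diff [of "x - a" "x - b"] by simp
    also have "\<dots> = psi \<bullet> (b - a)"
      using J [of a] J [of b] U [OF \<open>a \<in> U\<close>] D [OF \<open>b \<in> D\<close>]
      by (simp add: norming_def inner_diff_right)
    finally have "psi \<bullet> (b - a) = N (b - a)"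
      using assms(1) by (simp add: norming_def order_antisym)
    moreover have "b \<noteq> a"
      using that \<open>U \<inter> D = {}\<close> by auto
    ultimately show ?thesis
      by (simp add: F_def unit_ball_def N_scaleR N_nonneg)
  qed
  moreover have "card (U \<union> D) = 2 * card U"
    using card_Un_disjoint [OF \<open>finite U\<close> \<open>finite D\<close> \<open>U \<inter> D = {}\<close>] \<open>card U = card D\<close> by simp
  ultimately show ?thesis
    unfolding double_cluster_def using \<open>bij_betw X _ D\<close> \<open>bij_betw Y _ U\<close>
    by (intro exI [of _ "card U"] exI [of _ X] exI [of _ Y] conjI exI [of _ F])
      (auto simp: bij_betw_def)
qed

lemma (in plane_norm) FT_if_opposite_norming:
  assumes "finite U" and "finite D" and "U \<inter> D = {}" and "card U = card D"
    and J: "\<And>a. norming N (x - a) (J a)"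
    and U: "\<And>a. a \<in> U \<Longrightarrow> J a = psi" and D: "\<And>b. b \<in> D \<Longrightarrow> J b = - psi"
  shows "x \<in> FT N (U \<union> D)"
proof (rule FT_if_sum_norming_eq_0)
  show "finite (U \<union> D)"
    using assms(1,2) by simp
  show "norming N (x - c) (J c)" for c
    by (rule J)
  have "(\<Sum>c\<in>U \<union> D. J c) = (\<Sum>c\<in>U. J c) + (\<Sum>c\<in>D. J c)"
    by (rule sum.union_disjoint [OF assms(1-3)])
  also have "\<dots> = (\<Sum>c\<in>U. psi) + (\<Sum>c\<in>D. - psi)"
    using U D by (intro arg_cong2 [where f = "(+)"] sum.cong) simp_all
  also have "\<dots> = 0"
    using assms(4) by (simp add: sum_negf)
  finally show "(\<Sum>c\<in>U \<union> D. J c) = 0" .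
qed

context norm_frame
begin

lemma double_cluster_if_FT_outside:
  assumes "finite A" and "x \<in> FT N A" and "x \<notin> A" and "\<And>a. a \<in> A \<Longrightarrow> 0 \<le> zeta \<bullet> (x - a)"
  shows "double_cluster N A"
proof -
  obtain J where J: "\<And>a. norming N (x - a) (J a)"
    using choice [of "\<lambda>a g. norming N (x - a) g"] norming_exists by blast
  have upper: "upper_dual_unit N z (J a)" if "a \<in> A" for a
    by (intro upper_dual_unit_if_zeta_nonneg [OF _ J assms(4)]) (use that \<open>x \<notin> A\<close> in auto)
  have "(\<Sum>a\<in>A. J a) \<bullet> v = 0" for v
    using FT_first_order [OF assms(1,2), of J v] FT_first_order [OF assms(1,2), of J "- v"] J \<open>x \<notin> A\<close>
    by (simp add: inner_sum_left sum_negf)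
  from this [of "\<Sum>a\<in>A. J a"] have sum_0: "(\<Sum>a\<in>A. J a) = 0"
    by simp
  obtain U D where "A = U \<union> D" "U \<inter> D = {}" "card U = card D"
    and U: "\<And>a. a \<in> U \<Longrightarrow> J a = psi" and D: "\<And>a. a \<in> D \<Longrightarrow> J a = - psi"
    using opposite_split_if_sum_eq_0 [OF assms(1) upper sum_0] by metis
  moreover have "finite U" "finite D"
    using assms(1) \<open>A = U \<union> D\<close> by simp_all
  ultimately show ?thesis
    using double_cluster_if_opposite_norming [OF norming_e N_e _ _ _ _ J U D] by simp
qed

lemma pseudo_double_cluster_if_FT_inside:
  assumes "finite A" and "even (card A)" and "x \<in> FT N A" and "x \<in> A"
    and "\<And>a. a \<in> A \<Longrightarrow> 0 \<le> zeta \<bullet> (x - a)"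
  shows "pseudo_double_cluster N A"
proof -
  obtain J where J: "\<And>a. norming N (x - a) (J a)"
    using choice [of "\<lambda>a g. norming N (x - a) g"] norming_exists by blast
  have upper: "upper_dual_unit N z (J a)" if "a \<in> A - {x}" for a
    using upper_dual_unit_if_zeta_nonneg [OF _ J assms(5)] that by auto
  have le: "(\<Sum>a\<in>A - {x}. J a \<bullet> w) \<le> N w" for w
    using FT_first_order [OF assms(1,3), of J "- w"] J \<open>x \<in> A\<close> by (simp add: sum_negf)
  have "0 < card A"
    using assms(1,4) card_gt_0_iff by blast
  then have "odd (card (A - {x}))"
    using assms(2,4) by (simp add: card_Diff_singleton)
  then obtain m where "card (A - {x}) = 2 * m + 1"
    by (rule oddE)
  obtain p U D where split: "A - {x} = insert p (U \<union> D)" "p \<notin> U \<union> D" "U \<inter> D = {}"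
    "card U = card D" and U: "\<And>a. a \<in> U \<Longrightarrow> J a = psi" and D: "\<And>a. a \<in> D \<Longrightarrow> J a = - psi"
    using opposite_split_if_sum_le [OF _ \<open>card (A - {x}) = 2 * m + 1\<close> upper le] assms(1)
    by (metis finite_Diff)
  then have "finite U" "finite D"
    using assms(1) finite_subset [of U A] finite_subset [of D A] by blast+
  have "double_cluster N (U \<union> D)"
    by (rule double_cluster_if_opposite_norming [OF norming_e N_e \<open>finite U\<close> \<open>finite D\<close> split(3,4) J U D])
  moreover have "x \<in> FT N (U \<union> D)"
    by (rule FT_if_opposite_norming [OF \<open>finite U\<close> \<open>finite D\<close> split(3,4) J U D])
  moreover have "A = U \<union> D \<union> {x, p}"
    using split(1) \<open>x \<in> A\<close> by blast
  ultimately show ?thesis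
    unfolding pseudo_double_cluster_def by blast
qed

end

theorem corollary4p8:
  fixes N :: "real^2 \<Rightarrow> real" and A :: "(real^2) set"
  assumes "is_norm N" and "smooth_norm N"
    and "finite A" and "even (card A)"
    and "FT N A \<inter> frontier (convex hull A) \<noteq> {}"
  shows "double_cluster N A \<or> pseudo_double_cluster N A"
proof -
  interpret smooth_plane_norm N
    using assms(1,2) by unfold_locales
  obtain x where "x \<in> FT N A" and "x \<in> frontier (convex hull A)"
    using assms(5) by blast
  then obtain h where "h \<noteq> 0" and h: "\<And>y. y \<in> convex hull A \<Longrightarrow> h \<bullet> y \<le> h \<bullet> x"
    using frontier_convex_supporting [OF convex_convex_hull] by metis
  obtain e z psi zeta c where "norm_frame N e z psi zeta" and "0 < c" and "zeta = c *\<^sub>R h"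
    using exists_norm_frame [OF \<open>h \<noteq> 0\<close>] by blast
  interpret norm_frame N e z psi zeta
    by fact
  have "0 \<le> zeta \<bullet> (x - a)" if "a \<in> A" for a
    using h [of a] hull_subset [of A convex] that \<open>0 < c\<close> \<open>zeta = c *\<^sub>R h\<close>
    by (auto simp: inner_diff_right)
  then show ?thesis
    using double_cluster_if_FT_outside pseudo_double_cluster_if_FT_inside \<open>x \<in> FT N A\<close> assms(3,4)
    by blast
qed

end
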